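(* Let $G^{\rm hol}_{\mathbb C}:=\exp(\tfrac{\pi i}{2}h)\,G^{\rm cut}_{\mathbb C}\,\exp(\tfrac{\pi i}{2}h)\subseteq G_{\mathbb C}$. Then $G^{\rm hol}_{\mathbb C}$ is invariant under complex conjugation $g\mapsto\overline g$, under inversion $g\mapsto g^{-1}$, and under conjugation $g\mapsto\exp(\pi ih)g\exp(-\pi ih)$, and $$G^{\rm hol}_{\mathbb C}=H_{\mathbb C}\exp(\mathcal S_\pi h)\,G\,\exp(\mathcal S_\pi h)H_{\mathbb C}=H_{\mathbb C}\exp(-\mathcal S_\pi h)\,G\,\exp(-\mathcal S_\pi h)H_{\mathbb C},$$ where $\mathcal S_\pi=\{\zeta\in\mathbb C:0<\mathrm{Im}\,\zeta<\pi\}$.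
   Context: Let $d\ge1$, $\beta(z,w)=z_0w_0-z_1w_1-\dots-z_dw_d$ on $\mathbb C^{1+d}$, $G=\mathrm{SO}_{1,d}(\mathbb R)_e$, $G_{\mathbb C}=\mathrm{SO}_{1+d}(\mathbb C)$ (determinant-one complex linear maps preserving $\beta$), $\overline g$ entrywise complex conjugation, $K_{\mathbb C}=\{g\in G_{\mathbb C}:ge_0=e_0\}$, $H_{\mathbb C}=\{g\in G_{\mathbb C}:ge_1=e_1\}$. Let $h(z_0,z_1,z_2,\dots)=(z_1,z_0,0,\dots,0)$, $\Xi_{A_{\mathbb C}}=\exp(\{\zeta:|\mathrm{Im}\,\zeta|<\pi/2\}h)$, and $G^{\rm cut}_{\mathbb C}=K_{\mathbb C}\,\Xi_{A_{\mathbb C}}\,G\,\Xi_{A_{\mathbb C}}\,K_{\mathbb C}$. *)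

theory Defs
  imports "HOL-Analysis.Analysis"
begin

text \<open>Matrices are of type complex^'n^'n (rows indexed first). The index type 'n
 has CARD('n) = 1 + d elements; two distinct indices i0, i1 play the roles of the
 basis vectors e_0 and e_1.\<close>

definition beta :: "'n::finite \<Rightarrow> complex^'n \<Rightarrow> complex^'n \<Rightarrow> complex" where
  "beta i0 z w = z$i0 * w$i0 - (\<Sum>k\<in>UNIV - {i0}. z$k * w$k)"

definition beta_real :: "'n::finite \<Rightarrow> real^'n \<Rightarrow> real^'n \<Rightarrow> real" where
  "beta_real i0 z w = z$i0 * w$i0 - (\<Sum>k\<in>UNIV - {i0}. z$k * w$k)"

definition GC :: "'n::finite \<Rightarrow> (complex^'n^'n) set" where
  "GC i0 = {g. det g = 1 \<and> (\<forall>z w. beta i0 (g *v z) (g *v w) = beta i0 z w)}"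

definition SOR :: "'n::finite \<Rightarrow> (real^'n^'n) set" where
  "SOR i0 = {g. det g = 1 \<and> (\<forall>z w. beta_real i0 (g *v z) (g *v w) = beta_real i0 z w)}"

definition cmat :: "real^'n^'m \<Rightarrow> complex^'n^'m" where
  "cmat A = (\<chi> i j. complex_of_real (A$i$j))"

definition Greal :: "'n::finite \<Rightarrow> (complex^'n^'n) set" where
  "Greal i0 = cmat ` connected_component_set (SOR i0) (mat 1)"

definition KC :: "'n::finite \<Rightarrow> (complex^'n^'n) set" where
  "KC i0 = {g \<in> GC i0. g *v axis i0 1 = axis i0 1}"

definition HC :: "'n::finite \<Rightarrow> 'n \<Rightarrow> (complex^'n^'n) set" where
  "HC i0 i1 = {g \<in> GC i0. g *v axis i1 1 = axis i1 1}"

definition mcnj :: "complex^'n^'m \<Rightarrow> complex^'n^'m" where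
  "mcnj g = (\<chi> i j. cnj (g$i$j))"

definition smat :: "complex \<Rightarrow> complex^'n^'m \<Rightarrow> complex^'n^'m" where
  "smat c A = (\<chi> i j. c * A$i$j)"

definition hmat :: "'n::finite \<Rightarrow> 'n \<Rightarrow> complex^'n^'n" where
  "hmat i0 i1 = (\<chi> i j. if (i = i0 \<and> j = i1) \<or> (i = i1 \<and> j = i0) then 1 else 0)"

fun mpow :: "complex^'n^'n \<Rightarrow> nat \<Rightarrow> complex^'n^'n" where
  "mpow A 0 = mat 1"
| "mpow A (Suc k) = A ** mpow A k"

definition mexp :: "complex^'n^'n \<Rightarrow> complex^'n^'n" where
  "mexp A = (\<Sum>k. inverse (fact k) *\<^sub>R mpow A k)"

definition setmul :: "(complex^'n^'n) set \<Rightarrow> (complex^'n^'n) set \<Rightarrow> (complex^'n^'n) set"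
  (infixl "\<cdot>\<cdot>" 70) where
  "A \<cdot>\<cdot> B = {a ** b | a b. a \<in> A \<and> b \<in> B}"

definition XiA :: "'n::finite \<Rightarrow> 'n \<Rightarrow> (complex^'n^'n) set" where
  "XiA i0 i1 = {mexp (smat \<zeta> (hmat i0 i1)) | \<zeta>. \<bar>Im \<zeta>\<bar> < pi / 2}"

definition Gcut :: "'n::finite \<Rightarrow> 'n \<Rightarrow> (complex^'n^'n) set" where
  "Gcut i0 i1 = KC i0 \<cdot>\<cdot> XiA i0 i1 \<cdot>\<cdot> Greal i0 \<cdot>\<cdot> XiA i0 i1 \<cdot>\<cdot> KC i0"

definition Ghol :: "'n::finite \<Rightarrow> 'n \<Rightarrow> (complex^'n^'n) set" where
  "Ghol i0 i1 = {mexp (smat (pi * \<i> / 2) (hmat i0 i1))} \<cdot>\<cdot> Gcut i0 i1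
                 \<cdot>\<cdot> {mexp (smat (pi * \<i> / 2) (hmat i0 i1))}"

definition Spi :: "complex set" where
  "Spi = {\<zeta>. 0 < Im \<zeta> \<and> Im \<zeta> < pi}"

definition expS :: "'n::finite \<Rightarrow> 'n \<Rightarrow> complex set \<Rightarrow> (complex^'n^'n) set" where
  "expS i0 i1 S = {mexp (smat \<zeta> (hmat i0 i1)) | \<zeta>. \<zeta> \<in> S}"

end

theory Submission
  imports Defs
begin

(* The matrices exp(\<zeta> h) are computed explicitly: in the basis e_0 \<plusminus> e_1 of the plane
   they are diag(e^\<zeta>, e^-\<zeta>), so they form a commuting family of Lorentz transformations with
   exp(\<plusminus>\<pi>i h) = -1 on the plane, and exp(\<pi>i/2 h) maps e_0 to i e_1 and e_1 to i e_0.
   Hence conjugation by exp(\<pi>i/2 h) interchanges K_C and H_C, and the two outer factors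
   exp(\<pi>i/2 h) of G_hol can be pushed inwards, shifting the strip |Im \<zeta>| < \<pi>/2 to S_\<pi>.
   The element exp(\<pi>i h) commutes with every exp(\<zeta> h), squares to 1 and normalises both H_C
   and the identity component G, which allows translating S_\<pi> by \<plusminus>\<pi>i onto -S_\<pi>.
   Complex conjugation and inversion map S_\<pi> onto -S_\<pi> and preserve H_C and G, which gives
   the remaining invariances. *)

lemma sum_UNIV_split2:
  fixes f :: "'n::finite \<Rightarrow> 'a::comm_monoid_add"
  assumes "i0 \<noteq> i1"
  shows "sum f UNIV = f i0 + f i1 + sum f (UNIV - {i0, i1})"
  using assms sum.subset_diff[of "{i0, i1}" UNIV f] by (simp add: add.commute)

lemma matrix_vector_mult_axis: "(A *v axis a 1) $ k = (A $ k $ a :: 'a::semiring_1)"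
proof -
  have "(\<Sum>j\<in>UNIV. A $ k $ j * axis a 1 $ j) = (\<Sum>j\<in>UNIV. if j = a then A $ k $ a else 0)"
    by (rule sum.cong) (auto simp: axis_def)
  then show ?thesis by (simp add: matrix_vector_mult_def)
qed

lemma matrix_inv_eq_left_inverse:
  fixes A B :: "'a::field^'n^'n"
  assumes "B ** A = mat 1"
  shows "matrix_inv A = B"
proof -
  have "A ** B = mat 1" using assms matrix_left_right_inverse by blast
  then have AinvA: "A ** matrix_inv A = mat 1 \<and> matrix_inv A ** A = mat 1"
    using assms unfolding matrix_inv_def by (rule someI[where x = B, OF conjI])
  have "matrix_inv A = (B ** A) ** matrix_inv A" by (simp add: assms)
  also have "\<dots> = B" by (metis matrix_mul_assoc AinvA matrix_mul_rid)
  finally show ?thesis .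
qed

lemma matrix_mult3_fixes:
  fixes A B C :: "'a::field^'n::finite^'n"
  assumes "C *v u = p *s v" "B *v v = v" "A *v v = q *s u" "q * p = 1"
  shows "(A ** B ** C) *v u = u"
proof -
  have "(A ** B ** C) *v u = A *v (B *v (C *v u))"
    by (simp add: matrix_vector_mul_assoc matrix_mul_assoc)
  also have "\<dots> = u"
    using assms by (simp add: vector_scalar_commute vector_smult_assoc mult.commute)
  finally show ?thesis .
qed

lemma connected_component_set_image_subset:
  assumes "continuous_on S f" "f ` S \<subseteq> S" "f x = x" "x \<in> S"
  shows "f ` connected_component_set S x \<subseteq> connected_component_set S x"
proof (rule connected_component_maximal)
  have sub: "connected_component_set S x \<subseteq> S" by (rule connected_component_subset)
  show "x \<in> f ` connected_component_set S x"
    using assms(3,4) by (metis connected_component_refl image_eqI mem_Collect_eq)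
  show "connected (f ` connected_component_set S x)"
    using continuous_on_subset[OF assms(1) sub] by (intro connected_continuous_image) auto
  show "f ` connected_component_set S x \<subseteq> S" using sub assms(2) by blast
qed

section \<open>The Lorentz form\<close>

definition eta :: "'n \<Rightarrow> 'n \<Rightarrow> 'a::ring_1" where
  "eta i0 k = (if k = i0 then 1 else -1)"

definition minkowski :: "'n::finite \<Rightarrow> 'a::comm_ring_1^'n \<Rightarrow> 'a^'n \<Rightarrow> 'a" where
  "minkowski i0 z w = (\<Sum>k\<in>UNIV. eta i0 k * z $ k * w $ k)"

definition lorentz :: "'n::finite \<Rightarrow> 'a::comm_ring_1^'n^'n \<Rightarrow> bool" where
  "lorentz i0 g \<longleftrightarrow>
     (\<forall>a b. (\<Sum>k\<in>UNIV. eta i0 k * g $ k $ a * g $ k $ b) = (if a = b then eta i0 a else 0))"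

definition lorentz_adjoint :: "'n::finite \<Rightarrow> 'a::comm_ring_1^'n^'n \<Rightarrow> 'a^'n^'n" where
  "lorentz_adjoint i0 g = (\<chi> a b. eta i0 a * eta i0 b * g $ b $ a)"

lemma eta_mult_self [simp]: "eta i0 k * eta i0 k = 1"
  by (simp add: eta_def)

lemma minkowski_eq:
  "minkowski i0 z w = z $ i0 * w $ i0 - (\<Sum>k\<in>UNIV - {i0}. z $ k * w $ k)"
proof -
  have "minkowski i0 z w = eta i0 i0 * z $ i0 * w $ i0 + (\<Sum>k\<in>UNIV - {i0}. eta i0 k * z $ k * w $ k)"
    unfolding minkowski_def by (rule sum.remove) simp_all
  also have "(\<Sum>k\<in>UNIV - {i0}. eta i0 k * z $ k * w $ k) = (\<Sum>k\<in>UNIV - {i0}. - (z $ k * w $ k))"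
    by (rule sum.cong) (auto simp: eta_def)
  finally show ?thesis by (simp add: eta_def sum_negf)
qed

lemma beta_eq_minkowski: "beta i0 = minkowski (i0 :: 'n::finite)"
  by (intro ext) (simp add: beta_def minkowski_eq)

lemma beta_real_eq_minkowski: "beta_real i0 = minkowski (i0 :: 'n::finite)"
  by (intro ext) (simp add: beta_real_def minkowski_eq)

lemma minkowski_axis: "minkowski i0 (axis a 1) (axis b 1) = (if a = b then eta i0 a else 0)"
proof -
  have "minkowski i0 (axis a 1) (axis b 1)
      = (\<Sum>k\<in>UNIV. if k = a then (if a = b then eta i0 a else 0) else 0)"
    unfolding minkowski_def by (rule sum.cong) (auto simp: axis_def)
  then show ?thesis by simp
qed

lemma lorentz_iff_preserves_minkowski:
  "lorentz i0 g \<longleftrightarrow> (\<forall>z w. minkowski i0 (g *v z) (g *v w) = minkowski i0 z w)"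
proof
  assume "lorentz i0 g"
  then have gram: "(\<Sum>k\<in>UNIV. eta i0 k * g $ k $ a * g $ k $ b) = (if a = b then eta i0 a else 0)"
    for a b by (simp add: lorentz_def)
  show "\<forall>z w. minkowski i0 (g *v z) (g *v w) = minkowski i0 z w"
  proof (intro allI)
    fix z w
    have "minkowski i0 (g *v z) (g *v w)
        = (\<Sum>k\<in>UNIV. \<Sum>a\<in>UNIV. \<Sum>b\<in>UNIV. eta i0 k * g $ k $ a * g $ k $ b * (z $ a * w $ b))"
      by (simp add: minkowski_def matrix_vector_mult_def sum_distrib_left sum_distrib_right mult_ac)
    also have "\<dots> = (\<Sum>a\<in>UNIV. \<Sum>k\<in>UNIV. \<Sum>b\<in>UNIV. eta i0 k * g $ k $ a * g $ k $ b * (z $ a * w $ b))"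
      by (rule sum.swap)
    also have "\<dots> = (\<Sum>a\<in>UNIV. \<Sum>b\<in>UNIV. \<Sum>k\<in>UNIV. eta i0 k * g $ k $ a * g $ k $ b * (z $ a * w $ b))"
      by (rule sum.cong[OF refl], rule sum.swap)
    also have "\<dots> = (\<Sum>a\<in>UNIV. \<Sum>b\<in>UNIV. (if a = b then eta i0 a else 0) * (z $ a * w $ b))"
      by (simp only: sum_distrib_right[symmetric] gram)
    also have "\<dots> = (\<Sum>a\<in>UNIV. \<Sum>b\<in>UNIV. if b = a then eta i0 a * z $ a * w $ a else 0)"
      by (rule sum.cong[OF refl], rule sum.cong[OF refl]) auto
    also have "\<dots> = minkowski i0 z w"
      by (simp add: minkowski_def)
    finally show "minkowski i0 (g *v z) (g *v w) = minkowski i0 z w" .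
  qed
next
  assume "\<forall>z w. minkowski i0 (g *v z) (g *v w) = minkowski i0 z w"
  then have "minkowski i0 (g *v axis a 1) (g *v axis b 1) = (if a = b then eta i0 a else 0)" for a b
    by (simp add: minkowski_axis)
  then show "lorentz i0 g"
    by (simp add: lorentz_def minkowski_def matrix_vector_mult_axis)
qed

lemma lorentz_mult: "lorentz i0 g \<Longrightarrow> lorentz i0 h \<Longrightarrow> lorentz i0 (g ** h)"
  by (simp add: lorentz_iff_preserves_minkowski matrix_vector_mul_assoc[symmetric])

lemma lorentz_one: "lorentz i0 (mat 1)"
  by (simp add: lorentz_iff_preserves_minkowski)

lemma lorentz_adjoint_mult:
  assumes "lorentz i0 g"
  shows "lorentz_adjoint i0 g ** g = mat 1"
proof -
  have "(lorentz_adjoint i0 g ** g) $ a $ b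
      = eta i0 a * (\<Sum>k\<in>UNIV. eta i0 k * g $ k $ a * g $ k $ b)" for a b
    by (simp add: lorentz_adjoint_def matrix_matrix_mult_def sum_distrib_left mult_ac)
  with assms show ?thesis
    by (simp add: vec_eq_iff lorentz_def mat_def)
qed

lemma det_lorentz_adjoint: "det (lorentz_adjoint i0 g) = det g"
proof -
  have "lorentz_adjoint i0 g = (\<chi> a. eta i0 a *s transpose (\<chi> b. eta i0 b *s g $ b) $ a)"
    by (simp add: vec_eq_iff lorentz_adjoint_def transpose_def)
  then have "det (lorentz_adjoint i0 g) = (\<Prod>k\<in>UNIV. eta i0 k) * ((\<Prod>k\<in>UNIV. eta i0 k) * det g)"
    by (simp add: det_rows_mul det_transpose)
  also have "\<dots> = det g"
    by (simp add: prod.distrib[symmetric] mult.assoc[symmetric])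
  finally show ?thesis .
qed

lemma det_lorentz_square:
  assumes "lorentz i0 g"
  shows "det g * det g = 1"
  using det_mul[of "lorentz_adjoint i0 g" g]
  by (simp add: lorentz_adjoint_mult[OF assms] det_lorentz_adjoint)

lemma matrix_inv_lorentz:
  fixes g :: "'a::field^'n::finite^'n"
  shows "lorentz i0 g \<Longrightarrow> matrix_inv g = lorentz_adjoint i0 g"
  by (rule matrix_inv_eq_left_inverse) (rule lorentz_adjoint_mult)

lemma lorentz_adjoint_lorentz:
  fixes g :: "'a::field^'n::finite^'n"
  assumes "lorentz i0 g"
  shows "lorentz i0 (lorentz_adjoint i0 g)"
proof -
  have "g ** lorentz_adjoint i0 g = mat 1"
    using lorentz_adjoint_mult[OF assms] matrix_left_right_inverse by blast
  then have "g *v (lorentz_adjoint i0 g *v z) = z" for z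
    by (simp add: matrix_vector_mul_assoc)
  then show ?thesis
    using assms unfolding lorentz_iff_preserves_minkowski by metis
qed

definition SO_lorentz :: "'n::finite \<Rightarrow> ('a::field^'n^'n) set" where
  "SO_lorentz i0 = {g. det g = 1 \<and> lorentz i0 g}"

lemma GC_eq_SO_lorentz: "GC i0 = SO_lorentz i0"
  by (simp add: GC_def SO_lorentz_def beta_eq_minkowski lorentz_iff_preserves_minkowski)

lemma SOR_eq_SO_lorentz: "SOR i0 = SO_lorentz i0"
  by (simp add: SOR_def SO_lorentz_def beta_real_eq_minkowski lorentz_iff_preserves_minkowski)

lemma SO_lorentz_mult: "g \<in> SO_lorentz i0 \<Longrightarrow> h \<in> SO_lorentz i0 \<Longrightarrow> g ** h \<in> SO_lorentz i0"
  by (simp add: SO_lorentz_def det_mul lorentz_mult)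

lemma SO_lorentz_one: "mat 1 \<in> SO_lorentz i0"
  by (simp add: SO_lorentz_def lorentz_one)

lemma SO_lorentz_adjoint: "g \<in> SO_lorentz i0 \<Longrightarrow> lorentz_adjoint i0 g \<in> SO_lorentz i0"
  by (simp add: SO_lorentz_def det_lorentz_adjoint lorentz_adjoint_lorentz)

lemma SO_lorentz_inv: "g \<in> SO_lorentz i0 \<Longrightarrow> matrix_inv g \<in> SO_lorentz i0"
  using SO_lorentz_adjoint[of g i0] matrix_inv_lorentz[of i0 g] by (simp add: SO_lorentz_def)

lemma SO_lorentz_inverse:
  fixes g :: "'a::field^'n::finite^'n"
  assumes "g \<in> SO_lorentz i0"
  shows "matrix_inv g ** g = mat 1" and "g ** matrix_inv g = mat 1"
  using assms lorentz_adjoint_mult matrix_inv_lorentz matrix_left_right_inverse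
  by (fastforce simp: SO_lorentz_def)+

lemma cmat_mult: "cmat (A ** B) = cmat A ** cmat B"
  by (simp add: vec_eq_iff cmat_def matrix_matrix_mult_def)

lemma cmat_one: "cmat (mat 1) = mat 1"
  by (simp add: vec_eq_iff cmat_def mat_def)

lemma det_cmat: "det (cmat g) = of_real (det g)"
  by (simp add: det_def cmat_def)

lemma mcnj_cmat: "mcnj (cmat g) = cmat g"
  by (simp add: vec_eq_iff cmat_def mcnj_def)

lemma cmat_lorentz_adjoint: "cmat (lorentz_adjoint i0 g) = lorentz_adjoint i0 (cmat g)"
  by (simp add: vec_eq_iff cmat_def lorentz_adjoint_def eta_def)

lemma of_real_eta [simp]: "of_real (eta i0 k) = eta i0 k"
  by (simp add: eta_def)

lemma cnj_eta [simp]: "cnj (eta i0 k) = eta i0 k"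
  by (simp add: eta_def)

lemma lorentz_cmat:
  assumes "lorentz i0 g"
  shows "lorentz i0 (cmat g)"
proof -
  have "(\<Sum>k\<in>UNIV. eta i0 k * cmat g $ k $ a * cmat g $ k $ b)
      = of_real (\<Sum>k\<in>UNIV. eta i0 k * g $ k $ a * g $ k $ b)" for a b
    by (simp add: cmat_def)
  with assms show ?thesis by (simp add: lorentz_def)
qed

lemma cmat_SO_lorentz: "g \<in> SO_lorentz i0 \<Longrightarrow> cmat g \<in> SO_lorentz i0"
  by (simp add: SO_lorentz_def det_cmat lorentz_cmat)

lemma mcnj_mult: "mcnj (A ** B) = mcnj A ** mcnj B"
  by (simp add: vec_eq_iff mcnj_def matrix_matrix_mult_def)

lemma det_mcnj: "det (mcnj g) = cnj (det g)"
  by (simp add: det_def mcnj_def)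

lemma lorentz_mcnj:
  assumes "lorentz i0 g"
  shows "lorentz i0 (mcnj g)"
proof -
  have "(\<Sum>k\<in>UNIV. eta i0 k * mcnj g $ k $ a * mcnj g $ k $ b)
      = cnj (\<Sum>k\<in>UNIV. eta i0 k * g $ k $ a * g $ k $ b)" for a b
    by (simp add: mcnj_def)
  with assms show ?thesis by (simp add: lorentz_def)
qed

lemma mcnj_SO_lorentz: "g \<in> SO_lorentz i0 \<Longrightarrow> mcnj g \<in> SO_lorentz i0"
  by (simp add: SO_lorentz_def det_mcnj lorentz_mcnj)

lemma mcnj_fixes_axis:
  assumes "g *v axis i 1 = axis i 1"
  shows "mcnj g *v axis i 1 = axis i 1"
proof -
  have "g $ k $ i = axis i 1 $ k" for k
    using assms matrix_vector_mult_axis[of g i k] by simp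
  then show ?thesis
    unfolding vec_eq_iff matrix_vector_mult_axis by (simp add: mcnj_def axis_def)
qed

section \<open>The one-parameter group exp(\<zeta> h)\<close>

abbreviation exph :: "'n::finite \<Rightarrow> 'n \<Rightarrow> complex \<Rightarrow> complex^'n^'n" where
  "exph i0 i1 \<zeta> \<equiv> mexp (smat \<zeta> (hmat i0 i1))"

(* In the basis e_i0 + e_i1, e_i0 - e_i1 of the (i0,i1)-plane this acts as diag(a, b);
   on the remaining coordinates it is multiplication by c. *)
definition hblock :: "'n::finite \<Rightarrow> 'n \<Rightarrow> complex \<Rightarrow> complex \<Rightarrow> complex \<Rightarrow> complex^'n^'n" where
  "hblock i0 i1 a b c = (\<chi> i j.
     if i \<in> {i0, i1} \<and> j \<in> {i0, i1} then (if i = j then (a + b) / 2 else (a - b) / 2)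
     else if i = j then c else 0)"

lemma hblock_mult:
  assumes "i0 \<noteq> i1"
  shows "hblock i0 i1 a b c ** hblock i0 i1 a' b' c' = hblock i0 i1 (a * a') (b * b') (c * c')"
proof -
  let ?F = "hblock i0 i1 a b c" and ?F' = "hblock i0 i1 a' b' c'"
  have "(?F ** ?F') $ i $ j = hblock i0 i1 (a * a') (b * b') (c * c') $ i $ j" for i j
  proof (cases "i \<in> {i0, i1}")
    case True
    have "(\<Sum>k\<in>UNIV - {i0, i1}. ?F $ i $ k * ?F' $ k $ j) = 0"
      by (rule sum.neutral) (use True in \<open>auto simp: hblock_def\<close>)
    then have "(?F ** ?F') $ i $ j = ?F $ i $ i0 * ?F' $ i0 $ j + ?F $ i $ i1 * ?F' $ i1 $ j"
      by (simp add: matrix_matrix_mult_def sum_UNIV_split2[OF assms])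
    moreover have "?F $ i $ i0 * ?F' $ i0 $ j + ?F $ i $ i1 * ?F' $ i1 $ j
        = hblock i0 i1 (a * a') (b * b') (c * c') $ i $ j"
    proof (cases "j \<in> {i0, i1}")
      case True
      with \<open>i \<in> {i0, i1}\<close> assms
      consider "i = i0" "j = i0" | "i = i0" "j = i1" | "i = i1" "j = i0" | "i = i1" "j = i1"
        by blast
      then show ?thesis by cases (simp_all add: hblock_def assms assms[symmetric] field_simps)
    qed (use \<open>i \<in> {i0, i1}\<close> in \<open>auto simp: hblock_def\<close>)
    ultimately show ?thesis by simp
  next
    case False
    have "(?F ** ?F') $ i $ j = (\<Sum>k\<in>UNIV. if k = i then c * ?F' $ i $ j else 0)"
      unfolding matrix_matrix_mult_def vec_lambda_beta
      by (rule sum.cong) (use False in \<open>auto simp: hblock_def\<close>)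
    then show ?thesis using False by (auto simp: hblock_def)
  qed
  then show ?thesis by (simp add: vec_eq_iff)
qed

lemma hblock_sums:
  assumes "A sums a" "B sums b" "C sums c"
  shows "(\<lambda>k. hblock i0 i1 (A k) (B k) (C k)) sums hblock i0 i1 a b c"
proof -
  have partial_sums: "(\<Sum>k<n. hblock i0 i1 (A k) (B k) (C k))
      = hblock i0 i1 (\<Sum>k<n. A k) (\<Sum>k<n. B k) (\<Sum>k<n. C k)" for n
    by (simp add: vec_eq_iff hblock_def sum_divide_distrib[symmetric] sum.distrib sum_subtractf)
  show ?thesis
    using assms unfolding sums_def partial_sums
    by (intro vec_tendstoI) (auto simp: hblock_def intro!: tendsto_intros)
qed

lemma exph_eq_hblock:
  assumes "i0 \<noteq> i1"
  shows "exph i0 i1 \<zeta> = hblock i0 i1 (exp \<zeta>) (exp (- \<zeta>)) 1"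
proof -
  have one: "mat 1 = hblock i0 i1 1 1 1"
    using assms by (auto simp: vec_eq_iff hblock_def mat_def)
  have "mpow (hblock i0 i1 \<zeta> (- \<zeta>) 0) k = hblock i0 i1 (\<zeta> ^ k) ((- \<zeta>) ^ k) (0 ^ k)" for k
    by (induction k) (simp_all add: one hblock_mult[OF assms])
  moreover have "smat \<zeta> (hmat i0 i1) = hblock i0 i1 \<zeta> (- \<zeta>) 0"
    using assms by (auto simp: vec_eq_iff hblock_def smat_def hmat_def)
  moreover have "r *\<^sub>R hblock i0 i1 a b c = hblock i0 i1 (r *\<^sub>R a) (r *\<^sub>R b) (r *\<^sub>R c)" for r a b c
    unfolding vec_eq_iff hblock_def vector_scaleR_component vec_lambda_beta
    by (auto simp: scaleR_conv_of_real field_simps)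
  moreover have "(\<lambda>k. inverse (fact k) *\<^sub>R w ^ k) sums exp w" for w :: complex
    using exp_converges[of w]
    by (simp add: divide_inverse_commute field_class.field_divide_inverse scaleR_conv_of_real)
  ultimately have "(\<lambda>k. inverse (fact k) *\<^sub>R mpow (smat \<zeta> (hmat i0 i1)) k)
      sums hblock i0 i1 (exp \<zeta>) (exp (- \<zeta>)) (exp 0)"
    by (simp only:) (intro hblock_sums)
  then show ?thesis unfolding mexp_def by (simp add: sums_unique[symmetric])
qed

lemma exph_add:
  assumes "i0 \<noteq> i1"
  shows "exph i0 i1 \<zeta> ** exph i0 i1 \<xi> = exph i0 i1 (\<zeta> + \<xi>)"
  by (simp add: exph_eq_hblock[OF assms] hblock_mult[OF assms] exp_add[symmetric] add.commute)

lemma exph_add_left: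
  fixes X :: "complex^'n::finite^'n"
  assumes "i0 \<noteq> i1"
  shows "exph i0 i1 \<zeta> ** (exph i0 i1 \<xi> ** X) = exph i0 i1 (\<zeta> + \<xi>) ** X"
  by (metis matrix_mul_assoc exph_add[OF assms])

lemma exph_zero:
  assumes "i0 \<noteq> i1"
  shows "exph i0 i1 0 = mat 1"
  using assms by (auto simp: exph_eq_hblock vec_eq_iff hblock_def mat_def)

lemma lorentz_hblock:
  assumes n: "i0 \<noteq> i1" and ab: "a * b = 1"
  shows "lorentz i0 (hblock i0 i1 a b 1)"
  unfolding lorentz_def
proof (intro allI)
  fix x y
  let ?F = "hblock i0 i1 a b 1"
  have off_plane: "(\<Sum>k\<in>UNIV - {i0, i1}. eta i0 k * ?F $ k $ x * ?F $ k $ y)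
      = (\<Sum>k\<in>UNIV - {i0, i1}. if k = x then (if x = y then -1 else 0) else 0)"
    by (rule sum.cong) (auto simp: hblock_def eta_def)
  have hyperbola: "((a + b) / 2)\<^sup>2 - ((a - b) / 2)\<^sup>2 = 1"
    using ab by (simp add: field_simps power2_eq_square)
  have "(\<Sum>k\<in>UNIV. eta i0 k * ?F $ k $ x * ?F $ k $ y)
      = ?F $ i0 $ x * ?F $ i0 $ y - ?F $ i1 $ x * ?F $ i1 $ y
        + (if x \<notin> {i0, i1} \<and> x = y then -1 else 0)"
    unfolding sum_UNIV_split2[OF n] off_plane using n by (simp add: eta_def)
  also have "\<dots> = (if x = y then eta i0 x else 0)"
    using n hyperbola
    by (cases "x = i0"; cases "x = i1"; cases "y = i0"; cases "y = i1")
      (auto simp: hblock_def eta_def power2_eq_square field_simps)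
  finally show "(\<Sum>k\<in>UNIV. eta i0 k * ?F $ k $ x * ?F $ k $ y) = (if x = y then eta i0 x else 0)" .
qed

lemma exph_SO_lorentz:
  assumes n: "i0 \<noteq> i1"
  shows "exph i0 i1 \<zeta> \<in> SO_lorentz i0"
proof -
  have lor: "lorentz i0 (exph i0 i1 w)" for w
    by (simp add: exph_eq_hblock[OF n] lorentz_hblock[OF n] exp_minus)
  have "det (exph i0 i1 \<zeta>) = det (exph i0 i1 (\<zeta> / 2)) * det (exph i0 i1 (\<zeta> / 2))"
    by (simp add: exph_add[OF n] det_mul[symmetric])
  also have "\<dots> = 1" by (rule det_lorentz_square[OF lor])
  finally show ?thesis by (simp add: SO_lorentz_def lor)
qed

lemma mcnj_exph: "i0 \<noteq> i1 \<Longrightarrow> mcnj (exph i0 i1 \<zeta>) = exph i0 i1 (cnj \<zeta>)"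
  by (simp add: vec_eq_iff mcnj_def exph_eq_hblock hblock_def exp_cnj)

definition negate_plane :: "'n::finite \<Rightarrow> 'n \<Rightarrow> real^'n^'n" where
  "negate_plane i0 i1 = (\<chi> a b. if a = b then (if a \<in> {i0, i1} then -1 else 1) else 0)"

lemma negate_plane_square: "negate_plane i0 i1 ** negate_plane i0 i1 = mat 1"
proof -
  have "(negate_plane i0 i1 ** negate_plane i0 i1) $ a $ b
      = (\<Sum>k\<in>UNIV. if k = a then (if a = b then 1 else 0) else 0)" for a b
    unfolding matrix_matrix_mult_def vec_lambda_beta
    by (rule sum.cong) (auto simp: negate_plane_def)
  then show ?thesis by (simp add: vec_eq_iff mat_def)
qed

lemma negate_plane_SO_lorentz:
  assumes "i0 \<noteq> i1"
  shows "negate_plane i0 i1 \<in> SO_lorentz i0"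
proof -
  have "det (negate_plane i0 i1) = (\<Prod>k\<in>UNIV. negate_plane i0 i1 $ k $ k)"
    by (rule det_diagonal) (simp add: negate_plane_def)
  also have "\<dots> = 1"
    using assms prod.subset_diff[of "{i0, i1}" UNIV "\<lambda>k. negate_plane i0 i1 $ k $ k"]
    by (simp add: negate_plane_def)
  finally have det: "det (negate_plane i0 i1) = 1" .
  have "(negate_plane i0 i1 *v z) $ k = (if k \<in> {i0, i1} then -1 else 1) * z $ k" for z k
  proof -
    have "(\<Sum>j\<in>UNIV. negate_plane i0 i1 $ k $ j * z $ j)
        = (\<Sum>j\<in>UNIV. if j = k then (if k \<in> {i0, i1} then -1 else 1) * z $ k else 0)"
      by (rule sum.cong) (auto simp: negate_plane_def)
    then show ?thesis by (simp add: matrix_vector_mult_def)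
  qed
  then have "lorentz i0 (negate_plane i0 i1)"
    unfolding lorentz_iff_preserves_minkowski minkowski_def by (auto intro: sum.cong)
  with det show ?thesis by (simp add: SO_lorentz_def)
qed

lemma exph_pi:
  assumes "i0 \<noteq> i1"
  shows "exph i0 i1 (pi * \<i>) = cmat (negate_plane i0 i1)"
    and "exph i0 i1 (- pi * \<i>) = cmat (negate_plane i0 i1)"
  using assms by (auto simp: exph_eq_hblock hblock_def cmat_def negate_plane_def vec_eq_iff
      exp_eq_polar cis.ctr complex_eq_iff)

lemma negate_plane_cancel_left:
  fixes X :: "complex^'n::finite^'n"
  shows "cmat (negate_plane i0 i1) ** (cmat (negate_plane i0 i1) ** X) = X"
  by (simp add: matrix_mul_assoc cmat_mult[symmetric] negate_plane_square cmat_one)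

lemma negate_plane_commute_exph:
  assumes "i0 \<noteq> i1"
  shows "cmat (negate_plane i0 i1) ** exph i0 i1 \<zeta> = exph i0 i1 \<zeta> ** cmat (negate_plane i0 i1)"
  by (simp add: exph_pi(1)[OF assms, symmetric] exph_add[OF assms] add.commute)

(* The hypothesis says cosh \<sigma> = 0; then exp(\<sigma> h) swaps the lines through e_i0 and e_i1. *)
lemma exph_swaps_axes:
  assumes "i0 \<noteq> i1" "exp \<sigma> + exp (- \<sigma>) = 0"
  shows "exph i0 i1 \<sigma> *v axis i0 1 = exp \<sigma> *s axis i1 1"
    and "exph i0 i1 \<sigma> *v axis i1 1 = exp \<sigma> *s axis i0 1"
  using assms unfolding vec_eq_iff matrix_vector_mult_axis
  by (auto simp: exph_eq_hblock hblock_def axis_def eq_neg_iff_add_eq_0[symmetric])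

section \<open>The groups G, H_C and K_C\<close>

lemma Greal_subset_GC: "Greal i0 \<subseteq> GC i0"
  unfolding Greal_def GC_eq_SO_lorentz SOR_eq_SO_lorentz
  using connected_component_subset cmat_SO_lorentz by blast

lemma mcnj_Greal: "g \<in> Greal i0 \<Longrightarrow> mcnj g = g"
  unfolding Greal_def using mcnj_cmat by blast

lemma Greal_inv:
  assumes "g \<in> Greal i0"
  shows "matrix_inv g \<in> Greal i0"
proof -
  let ?C = "connected_component_set (SOR i0) (mat 1)"
  obtain g0 where g0: "g0 \<in> ?C" and g: "g = cmat g0"
    using assms unfolding Greal_def by blast
  have "lorentz i0 g0"
    using g0 connected_component_subset by (force simp: SOR_eq_SO_lorentz SO_lorentz_def)
  then have "matrix_inv g = cmat (lorentz_adjoint i0 g0)"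
    by (simp add: g matrix_inv_lorentz lorentz_cmat cmat_lorentz_adjoint)
  moreover have "lorentz_adjoint i0 ` ?C \<subseteq> ?C"
  proof (rule connected_component_set_image_subset)
    show "continuous_on (SOR i0) (lorentz_adjoint i0)"
      unfolding lorentz_adjoint_def by (intro continuous_intros)
    show "lorentz_adjoint i0 (mat 1) = mat 1"
      by (simp add: vec_eq_iff lorentz_adjoint_def mat_def)
  qed (auto simp: SOR_eq_SO_lorentz SO_lorentz_adjoint SO_lorentz_one)
  ultimately show ?thesis using g0 unfolding Greal_def by blast
qed

lemma Greal_conj_negate_plane:
  assumes n: "i0 \<noteq> i1" and g: "g \<in> Greal i0"
  shows "cmat (negate_plane i0 i1) ** g ** cmat (negate_plane i0 i1) \<in> Greal i0"
proof -
  let ?C = "connected_component_set (SOR i0) (mat 1)" and ?N = "negate_plane i0 i1"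
  obtain g0 where g0: "g0 \<in> ?C" and g: "g = cmat g0"
    using g unfolding Greal_def by blast
  have "(\<lambda>g. ?N ** g ** ?N) ` ?C \<subseteq> ?C"
  proof (rule connected_component_set_image_subset)
    show "continuous_on (SOR i0) (\<lambda>g. ?N ** g ** ?N)"
      unfolding matrix_matrix_mult_def by (intro continuous_intros)
  qed (auto simp: SOR_eq_SO_lorentz SO_lorentz_mult negate_plane_SO_lorentz[OF n]
      negate_plane_square SO_lorentz_one)
  then show ?thesis using g0 unfolding Greal_def g cmat_mult[symmetric] by blast
qed

lemma conj_exph_KC_HC:
  assumes n: "i0 \<noteq> i1" and cosh: "exp \<sigma> + exp (- \<sigma>) = 0"
  shows "k \<in> KC i0 \<Longrightarrow> exph i0 i1 \<sigma> ** k ** exph i0 i1 (- \<sigma>) \<in> HC i0 i1"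
    and "h \<in> HC i0 i1 \<Longrightarrow> exph i0 i1 \<sigma> ** h ** exph i0 i1 (- \<sigma>) \<in> KC i0"
proof -
  have cosh': "exp (- \<sigma>) + exp (- (- \<sigma>)) = 0" using cosh by (simp add: add.commute)
  note swap = exph_swaps_axes[OF n cosh] exph_swaps_axes[OF n cosh']
  have unit: "exp \<sigma> * exp (- \<sigma>) = 1" by (simp add: exp_minus)
  note closed = SO_lorentz_mult exph_SO_lorentz[OF n]
  show "k \<in> KC i0 \<Longrightarrow> exph i0 i1 \<sigma> ** k ** exph i0 i1 (- \<sigma>) \<in> HC i0 i1"
    using swap unit unfolding KC_def HC_def GC_eq_SO_lorentz
    by (auto simp: closed intro!: matrix_mult3_fixes)
  show "h \<in> HC i0 i1 \<Longrightarrow> exph i0 i1 \<sigma> ** h ** exph i0 i1 (- \<sigma>) \<in> KC i0"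
    using swap unit unfolding KC_def HC_def GC_eq_SO_lorentz
    by (auto simp: closed intro!: matrix_mult3_fixes)
qed

lemma HC_mcnj: "h \<in> HC i0 i1 \<Longrightarrow> mcnj h \<in> HC i0 i1"
  by (simp add: HC_def GC_eq_SO_lorentz mcnj_SO_lorentz mcnj_fixes_axis)

lemma HC_inv:
  assumes "h \<in> HC i0 i1"
  shows "matrix_inv h \<in> HC i0 i1"
proof -
  have h: "h \<in> SO_lorentz i0" "h *v axis i1 1 = axis i1 1"
    using assms by (auto simp: HC_def GC_eq_SO_lorentz)
  have "matrix_inv h *v axis i1 1 = (matrix_inv h ** h) *v axis i1 1"
    by (simp add: h(2) matrix_vector_mul_assoc[symmetric])
  then show ?thesis
    using h by (simp add: HC_def GC_eq_SO_lorentz SO_lorentz_inv SO_lorentz_inverse)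
qed

lemma HC_conj_negate_plane:
  assumes n: "i0 \<noteq> i1" and h: "h \<in> HC i0 i1"
  shows "cmat (negate_plane i0 i1) ** h ** cmat (negate_plane i0 i1) \<in> HC i0 i1"
proof -
  have N: "cmat (negate_plane i0 i1) \<in> SO_lorentz i0"
    by (rule cmat_SO_lorentz[OF negate_plane_SO_lorentz[OF n]])
  have "cmat (negate_plane i0 i1) *v axis i1 1 = (-1) *s axis i1 1"
    unfolding vec_eq_iff matrix_vector_mult_axis by (simp add: cmat_def negate_plane_def axis_def)
  with h N show ?thesis
    by (auto simp: HC_def GC_eq_SO_lorentz SO_lorentz_mult
        intro!: matrix_mult3_fixes[where p = "-1" and q = "-1"])
qed

section \<open>The sets H_C exp(S h) G exp(S h) H_C\<close>

definition HGH_set :: "'n::finite \<Rightarrow> 'n \<Rightarrow> complex set \<Rightarrow> (complex^'n^'n) set" where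
  "HGH_set i0 i1 S = HC i0 i1 \<cdot>\<cdot> expS i0 i1 S \<cdot>\<cdot> Greal i0 \<cdot>\<cdot> expS i0 i1 S \<cdot>\<cdot> HC i0 i1"

lemma mem_HGH_set_iff:
  "x \<in> HGH_set i0 i1 S \<longleftrightarrow> (\<exists>h1 z1 g z2 h2. h1 \<in> HC i0 i1 \<and> z1 \<in> S \<and> g \<in> Greal i0
     \<and> z2 \<in> S \<and> h2 \<in> HC i0 i1 \<and> x = h1 ** exph i0 i1 z1 ** g ** exph i0 i1 z2 ** h2)"
  unfolding HGH_set_def setmul_def expS_def by blast

lemma HGH_setI:
  "h1 \<in> HC i0 i1 \<Longrightarrow> z1 \<in> S \<Longrightarrow> g \<in> Greal i0 \<Longrightarrow> z2 \<in> S \<Longrightarrow> h2 \<in> HC i0 i1 \<Longrightarrow>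
    h1 ** exph i0 i1 z1 ** g ** exph i0 i1 z2 ** h2 \<in> HGH_set i0 i1 S"
  unfolding mem_HGH_set_iff by blast

lemma HGH_setE:
  assumes "x \<in> HGH_set i0 i1 S"
  obtains h1 z1 g z2 h2 where "h1 \<in> HC i0 i1" "z1 \<in> S" "g \<in> Greal i0" "z2 \<in> S" "h2 \<in> HC i0 i1"
    "x = h1 ** exph i0 i1 z1 ** g ** exph i0 i1 z2 ** h2"
  using assms unfolding mem_HGH_set_iff by blast

lemma HGH_set_subset_GC:
  assumes n: "i0 \<noteq> i1"
  shows "HGH_set i0 i1 S \<subseteq> GC i0"
proof
  fix x assume "x \<in> HGH_set i0 i1 S"
  then obtain h1 z1 g z2 h2 where "h1 \<in> HC i0 i1" "g \<in> Greal i0" "h2 \<in> HC i0 i1"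
    and "x = h1 ** exph i0 i1 z1 ** g ** exph i0 i1 z2 ** h2"
    by (rule HGH_setE)
  then show "x \<in> GC i0"
    using Greal_subset_GC
    by (auto simp: HC_def GC_eq_SO_lorentz intro!: SO_lorentz_mult exph_SO_lorentz[OF n])
qed

lemma HGH_set_translate:
  fixes i0 i1 :: "'n::finite"
  assumes n: "i0 \<noteq> i1" and c: "exph i0 i1 c = cmat (negate_plane i0 i1)"
  shows "HGH_set i0 i1 S \<subseteq> HGH_set i0 i1 ((+) c ` S)"
proof
  fix x assume "x \<in> HGH_set i0 i1 S"
  then obtain h1 z1 g z2 h2 where h: "h1 \<in> HC i0 i1" "h2 \<in> HC i0 i1" and z: "z1 \<in> S" "z2 \<in> S"
    and g: "g \<in> Greal i0" and x: "x = h1 ** exph i0 i1 z1 ** g ** exph i0 i1 z2 ** h2"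
    by (rule HGH_setE)
  let ?N = "cmat (negate_plane i0 i1)"
  have "exph i0 i1 (c + z1) = exph i0 i1 z1 ** ?N" "exph i0 i1 (c + z2) = ?N ** exph i0 i1 z2"
    using exph_add[OF n, of z1 c] exph_add[OF n, of c z2] by (simp_all add: c add.commute)
  then have "x = h1 ** exph i0 i1 (c + z1) ** (?N ** g ** ?N) ** exph i0 i1 (c + z2) ** h2"
    by (simp add: x matrix_mul_assoc[symmetric] negate_plane_cancel_left)
  then show "x \<in> HGH_set i0 i1 ((+) c ` S)"
    using h z g Greal_conj_negate_plane[OF n g] by (simp add: HGH_setI)
qed

lemma HGH_set_mcnj:
  assumes n: "i0 \<noteq> i1" and x: "x \<in> HGH_set i0 i1 S"
  shows "mcnj x \<in> HGH_set i0 i1 (cnj ` S)"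
proof -
  obtain h1 z1 g z2 h2 where h: "h1 \<in> HC i0 i1" "h2 \<in> HC i0 i1" and z: "z1 \<in> S" "z2 \<in> S"
    and g: "g \<in> Greal i0" and x: "x = h1 ** exph i0 i1 z1 ** g ** exph i0 i1 z2 ** h2"
    using x by (rule HGH_setE)
  have "mcnj x = mcnj h1 ** exph i0 i1 (cnj z1) ** g ** exph i0 i1 (cnj z2) ** mcnj h2"
    by (simp add: x mcnj_mult mcnj_exph[OF n] mcnj_Greal[OF g])
  then show ?thesis
    using h z g by (simp add: HGH_setI HC_mcnj)
qed

lemma HGH_set_inv:
  fixes i0 i1 :: "'n::finite"
  assumes n: "i0 \<noteq> i1" and x: "x \<in> HGH_set i0 i1 S"
  shows "matrix_inv x \<in> HGH_set i0 i1 (uminus ` S)"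
proof -
  obtain h1 z1 g z2 h2 where h: "h1 \<in> HC i0 i1" "h2 \<in> HC i0 i1" and z: "z1 \<in> S" "z2 \<in> S"
    and g: "g \<in> Greal i0" and x: "x = h1 ** exph i0 i1 z1 ** g ** exph i0 i1 z2 ** h2"
    using x by (rule HGH_setE)
  have inv_left: "matrix_inv a ** a = mat 1" if "a \<in> GC i0" for a
    using that SO_lorentz_inverse(1) by (simp add: GC_eq_SO_lorentz)
  then have cancel: "matrix_inv a ** (a ** X) = X" if "a \<in> GC i0" for a X :: "complex^'n^'n"
    using that by (simp add: matrix_mul_assoc)
  have "matrix_inv h2 ** exph i0 i1 (- z2) ** matrix_inv g ** exph i0 i1 (- z1) ** matrix_inv h1
      ** x = mat 1"
    using h g Greal_subset_GC[of i0]
    by (auto simp: x matrix_mul_assoc[symmetric] exph_add_left[OF n] exph_zero[OF n] HC_def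
        subsetD cancel inv_left)
  then have "matrix_inv x
      = matrix_inv h2 ** exph i0 i1 (- z2) ** matrix_inv g ** exph i0 i1 (- z1) ** matrix_inv h1"
    by (rule matrix_inv_eq_left_inverse)
  then show ?thesis
    using h z g by (simp add: HGH_setI HC_inv Greal_inv)
qed

lemma HGH_set_conj_negate_plane:
  fixes i0 i1 :: "'n::finite"
  assumes n: "i0 \<noteq> i1" and x: "x \<in> HGH_set i0 i1 S"
  shows "cmat (negate_plane i0 i1) ** x ** cmat (negate_plane i0 i1) \<in> HGH_set i0 i1 S"
proof -
  obtain h1 z1 g z2 h2 where h: "h1 \<in> HC i0 i1" "h2 \<in> HC i0 i1" and z: "z1 \<in> S" "z2 \<in> S"
    and g: "g \<in> Greal i0" and x: "x = h1 ** exph i0 i1 z1 ** g ** exph i0 i1 z2 ** h2"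
    using x by (rule HGH_setE)
  let ?N = "cmat (negate_plane i0 i1)"
  have commute: "?N ** (exph i0 i1 z ** (?N ** X)) = exph i0 i1 z ** X"
    for z and X :: "complex^'n^'n"
    by (metis matrix_mul_assoc negate_plane_commute_exph[OF n] negate_plane_cancel_left)
  have "?N ** x ** ?N
      = (?N ** h1 ** ?N) ** exph i0 i1 z1 ** (?N ** g ** ?N) ** exph i0 i1 z2 ** (?N ** h2 ** ?N)"
    by (simp add: x matrix_mul_assoc[symmetric] commute)
  then show ?thesis
    using h z g by (simp add: HGH_setI HC_conj_negate_plane[OF n] Greal_conj_negate_plane[OF n])
qed

lemma Spi_images:
  "(+) (pi * \<i>) ` uminus ` Spi = Spi"
  "(+) (- pi * \<i>) ` Spi = uminus ` Spi"
  "cnj ` Spi = uminus ` Spi"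
proof -
  have "z \<in> (+) (pi * \<i>) ` uminus ` Spi" if "z \<in> Spi" for z
    using that by (intro image_eqI[of z _ "- (pi * \<i> - z)"] imageI) (auto simp: Spi_def)
  then show "(+) (pi * \<i>) ` uminus ` Spi = Spi" by (auto simp: Spi_def)
  have "- pi * \<i> + z \<in> uminus ` Spi" "- z \<in> (+) (- pi * \<i>) ` Spi" if "z \<in> Spi" for z
    using that by (auto intro!: image_eqI[of _ _ "pi * \<i> - z"] simp: Spi_def)
  then show "(+) (- pi * \<i>) ` Spi = uminus ` Spi" by blast
  have "cnj z \<in> uminus ` Spi" "- z \<in> cnj ` Spi" if "z \<in> Spi" for z
    using that by (auto intro!: image_eqI[of _ _ "- cnj z"] simp: Spi_def)
  then show "cnj ` Spi = uminus ` Spi" by blast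
qed

lemma mem_Ghol_iff:
  "x \<in> Ghol i0 i1 \<longleftrightarrow> (\<exists>k1 z1 g z2 k2. k1 \<in> KC i0 \<and> \<bar>Im z1\<bar> < pi / 2 \<and> g \<in> Greal i0
     \<and> \<bar>Im z2\<bar> < pi / 2 \<and> k2 \<in> KC i0 \<and> x = exph i0 i1 (pi * \<i> / 2)
       ** (k1 ** exph i0 i1 z1 ** g ** exph i0 i1 z2 ** k2) ** exph i0 i1 (pi * \<i> / 2))"
  unfolding Ghol_def Gcut_def XiA_def setmul_def by blast

lemma GholI:
  "k1 \<in> KC i0 \<Longrightarrow> \<bar>Im z1\<bar> < pi / 2 \<Longrightarrow> g \<in> Greal i0 \<Longrightarrow> \<bar>Im z2\<bar> < pi / 2 \<Longrightarrow> k2 \<in> KC i0 \<Longrightarrow>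
    exph i0 i1 (pi * \<i> / 2) ** (k1 ** exph i0 i1 z1 ** g ** exph i0 i1 z2 ** k2)
      ** exph i0 i1 (pi * \<i> / 2) \<in> Ghol i0 i1"
  unfolding mem_Ghol_iff by blast

lemma Ghol_eq_HGH_set:
  fixes i0 i1 :: "'n::finite"
  assumes n: "i0 \<noteq> i1"
  shows "Ghol i0 i1 = HGH_set i0 i1 Spi"
proof (intro equalityI subsetI)
  define \<sigma> where "\<sigma> = complex_of_real pi * \<i> / 2"
  have "exp \<sigma> = \<i>" "exp (- \<sigma>) = - \<i>"
    by (simp_all add: \<sigma>_def exp_eq_polar cis.ctr complex_eq_iff)
  then have "exp \<sigma> + exp (- \<sigma>) = 0" "exp (- \<sigma>) + exp (- (- \<sigma>)) = 0" by simp_all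
  note KH = conj_exph_KC_HC[OF n this(1)] conj_exph_KC_HC[OF n this(2), simplified]
  have strip: "\<sigma> + z \<in> Spi \<longleftrightarrow> \<bar>Im z\<bar> < pi / 2" for z
    by (auto simp: \<sigma>_def Spi_def)
  note shift = matrix_mul_assoc[symmetric] exph_add_left[OF n] exph_add[OF n] exph_zero[OF n]
  fix x
  {
    assume "x \<in> Ghol i0 i1"
    then obtain k1 z1 g z2 k2 where k: "k1 \<in> KC i0" "k2 \<in> KC i0" and g: "g \<in> Greal i0"
      and z: "\<bar>Im z1\<bar> < pi / 2" "\<bar>Im z2\<bar> < pi / 2"
      and x: "x = exph i0 i1 \<sigma> ** (k1 ** exph i0 i1 z1 ** g ** exph i0 i1 z2 ** k2) ** exph i0 i1 \<sigma>"
      unfolding mem_Ghol_iff \<sigma>_def by blast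
    have "x = (exph i0 i1 \<sigma> ** k1 ** exph i0 i1 (- \<sigma>)) ** exph i0 i1 (\<sigma> + z1) ** g
        ** exph i0 i1 (\<sigma> + z2) ** (exph i0 i1 (- \<sigma>) ** k2 ** exph i0 i1 \<sigma>)"
      by (simp add: x shift add.commute)
    then show "x \<in> HGH_set i0 i1 Spi"
      using k g z by (simp add: HGH_setI KH strip)
  next
    assume "x \<in> HGH_set i0 i1 Spi"
    then obtain h1 z1 g z2 h2 where h: "h1 \<in> HC i0 i1" "h2 \<in> HC i0 i1" and g: "g \<in> Greal i0"
      and z: "\<sigma> + (- \<sigma> + z1) \<in> Spi" "\<sigma> + (- \<sigma> + z2) \<in> Spi"
      and x: "x = h1 ** exph i0 i1 z1 ** g ** exph i0 i1 z2 ** h2"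
      by (auto elim: HGH_setE)
    have "x = exph i0 i1 \<sigma> ** ((exph i0 i1 (- \<sigma>) ** h1 ** exph i0 i1 \<sigma>)
        ** exph i0 i1 (- \<sigma> + z1) ** g ** exph i0 i1 (- \<sigma> + z2)
        ** (exph i0 i1 \<sigma> ** h2 ** exph i0 i1 (- \<sigma>))) ** exph i0 i1 \<sigma>"
      by (simp add: x shift add.commute)
    also have "\<dots> \<in> Ghol i0 i1"
      using h g z KH unfolding strip by (intro GholI[of _ _ _ _ _ _ i1, folded \<sigma>_def]) simp_all
    finally show "x \<in> Ghol i0 i1" .
  }
qed

theorem mainTheorem10:
  fixes i0 i1 :: "'n::finite"
  assumes "i0 \<noteq> i1"
  shows "Ghol i0 i1 \<subseteq> GC i0
    \<and> (\<forall>g \<in> Ghol i0 i1. mcnj g \<in> Ghol i0 i1)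
    \<and> (\<forall>g \<in> Ghol i0 i1. matrix_inv g \<in> Ghol i0 i1)
    \<and> (\<forall>g \<in> Ghol i0 i1. mexp (smat (pi * \<i>) (hmat i0 i1)) ** g
                            ** mexp (smat (- pi * \<i>) (hmat i0 i1)) \<in> Ghol i0 i1)
    \<and> Ghol i0 i1 = HC i0 i1 \<cdot>\<cdot> expS i0 i1 Spi \<cdot>\<cdot> Greal i0 \<cdot>\<cdot> expS i0 i1 Spi \<cdot>\<cdot> HC i0 i1
    \<and> Ghol i0 i1 = HC i0 i1 \<cdot>\<cdot> expS i0 i1 (uminus ` Spi) \<cdot>\<cdot> Greal i0
                   \<cdot>\<cdot> expS i0 i1 (uminus ` Spi) \<cdot>\<cdot> HC i0 i1"
proof -
  note n = assms
  have Ghol: "Ghol i0 i1 = HGH_set i0 i1 Spi"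
    by (rule Ghol_eq_HGH_set[OF n])
  have reflected: "HGH_set i0 i1 (uminus ` Spi) = HGH_set i0 i1 Spi"
    using HGH_set_translate[OF n exph_pi(1)[OF n], of "uminus ` Spi"]
      HGH_set_translate[OF n exph_pi(2)[OF n], of Spi]
    unfolding Spi_images by (rule equalityI)
  have "mcnj g \<in> Ghol i0 i1" if "g \<in> Ghol i0 i1" for g
    using HGH_set_mcnj[OF n that[unfolded Ghol]] by (simp add: Ghol reflected Spi_images)
  moreover have "matrix_inv g \<in> Ghol i0 i1" if "g \<in> Ghol i0 i1" for g
    using HGH_set_inv[OF n that[unfolded Ghol]] by (simp add: Ghol reflected)
  moreover have "exph i0 i1 (pi * \<i>) ** g ** exph i0 i1 (- pi * \<i>) \<in> Ghol i0 i1"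
    if "g \<in> Ghol i0 i1" for g
    using HGH_set_conj_negate_plane[OF n that[unfolded Ghol]] unfolding Ghol exph_pi[OF n] .
  ultimately show ?thesis
    using HGH_set_subset_GC[OF n] by (simp add: Ghol reflected flip: HGH_set_def)
qed

end
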